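(* Assume hypotheses (A) and (B), and let $\rho=(\rho_1,\dots,\rho_d)$ satisfy $(\rho P)_i<\rho_i$ for all $i$. For $\varepsilon>0$ define $$h_{\varepsilon,\rho}(x)=\sum_{i=1}^d\prod_{j=1}^d\bigl(1+\varepsilon G_{ji}/\rho_i\bigr)^{x^j},\qquad x=(x^1,\dots,x^d)\in\mathbb{Z}_+^d.$$ Then $$\limsup_{|x|\to\infty}\frac{\mathcal{L}h_{\varepsilon,\rho}(x)}{h_{\varepsilon,\rho}(x)}=-\varepsilon\min_{1\le i\le d}\Bigl(\frac{\mu_i}{\rho_i+\varepsilon G_{ii}}-\frac{\nu_i}{\rho_i}\Bigr)<0$$ whenever the vector $(\varepsilon G_{ii}/\rho_i)_{1\le i\le d}$ belongs to $\Gamma$ and $0<\varepsilon<\min_i\frac{\rho_i}{G_{ii}}\bigl(\frac{\mu_i}{\nu_i}-1\bigr)$; in particular this holds whenever $$0<\varepsilon<\min_{1\le i\le d}\min\Bigl\{\frac{\rho_i}{G_{ii}}x_\rho,\ \frac{\rho_i}{G_{ii}}\Bigl(\frac{\mu_i}{\nu_i}-1\Bigr)\Bigr\}.$$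
   Context: Jackson network with $d$ queues: arrival rates $\lambda_i\ge0$, service rates $\mu_i>0$, routing matrix $P=(p_{ij})_{i,j=1}^d$ nonnegative with $p_{ii}=0$, $\sum_jp_{ij}\le1$, $p_{i0}=1-\sum_jp_{ij}$. With $\epsilon^i$ the unit vectors, let $q(\epsilon^i)=\lambda_i$, $q(-\epsilon^i)=\mu_ip_{i0}$, $q(\epsilon^j-\epsilon^i)=\mu_ip_{ij}$, $q=0$ otherwise; the process $(Z(t))$ on $\mathbb{Z}_+^d$ has generator $\mathcal{L}f(y)=\sum_{z\in\mathbb{Z}_+^d}q(z-y)(f(z)-f(y))$. Hypothesis (A): $(q(x-y))_{x,y\in\mathbb{Z}^d}$ is irreducible (equivalently spectral radius of $P$ $<1$ and for every $i$ some $\lambda_jp^{(n)}_{ji}>0$). Then the traffic equations $\nu_j=\lambda_j+\sum_i\nu_ip_{ij}$ have a unique solution with $\nu_i>0$. Hypothesis (B): $\nu_i<\mu_i$ for all $i$. $G=(I-P)^{-1}$, $(\rho P)_i=\sum_j\rho_jp_{ji}$, $\mathcal{R}(\rho)=\max_i(\rho P)_i/\rho_i$, $x_\rho=\sup\{x>0:\log(1+x)\ge\mathcal{R}(\rho)x\}$. $Q_{ij}$ is the probability that the chain on $\{0,\dots,d\}$ with transitions $p_{ij}$ ($0$ absorbing) started at $i$ ever visits $j$ (time $0$ included). For $\gamma\in\mathbb{R}_+^d$, $\overrightarrow{\gamma_i}$ has components $\gamma_i^j=\log(1+Q_{ji}\gamma_i)$; $\Gamma$ is the set of $\gamma\in\mathbb{R}_+^d$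 such that for every $i$ and nonzero $v\in\mathbb{R}_+^d$ with $v^i=0$, $\overrightarrow{\gamma_i}\cdot v<\max_j\overrightarrow{\gamma_j}\cdot v$. *)

theory Defs
  imports "HOL-Analysis.Analysis"
begin

text \<open>Jackson network with queues indexed by a finite type 'd (so d = CARD('d)).
  Arrival rates lam, service rates mu (vectors), routing matrix P with entries P$i$j = p_ij.\<close>

definition exit_prob :: "real^'d^'d \<Rightarrow> 'd \<Rightarrow> real" where
  "exit_prob P i = 1 - (\<Sum>j\<in>UNIV. P$i$j)"

definition jrate :: "real^'d \<Rightarrow> real^'d \<Rightarrow> real^'d^'d \<Rightarrow> int^'d \<Rightarrow> real" where
  "jrate lam mu P z =
     (\<Sum>i\<in>UNIV. if z = axis i 1 then lam$i else 0)
   + (\<Sum>i\<in>UNIV. if z = - axis i 1 then mu$i * exit_prob P i else 0)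
   + (\<Sum>i\<in>UNIV. \<Sum>j\<in>UNIV. if j \<noteq> i \<and> z = axis j 1 - axis i 1 then mu$i * P$i$j else 0)"

definition nonneg_lattice :: "(int^'d) set" where
  "nonneg_lattice = {x. \<forall>k. 0 \<le> x$k}"

text \<open>Generator: L f(y) = sum over z in Z_+^d of q(z-y)(f z - f y); only finitely many terms
  are nonzero, so we sum over those.\<close>
definition jgen :: "real^'d \<Rightarrow> real^'d \<Rightarrow> real^'d^'d \<Rightarrow> (int^'d \<Rightarrow> real) \<Rightarrow> int^'d \<Rightarrow> real" where
  "jgen lam mu P f y =
     (\<Sum>z\<in>{z\<in>nonneg_lattice. jrate lam mu P (z - y) \<noteq> 0}. jrate lam mu P (z - y) * (f z - f y))"

definition hypA :: "real^'d \<Rightarrow> real^'d \<Rightarrow> real^'d^'d \<Rightarrow> bool" where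
  "hypA lam mu P \<longleftrightarrow> (\<forall>x y :: int^'d. (x, y) \<in> {(a, b). 0 < jrate lam mu P (b - a)}\<^sup>*)"

definition Gmat :: "real^'d^'d \<Rightarrow> real^'d^'d" where
  "Gmat P = matrix_inv (mat 1 - P)"

definition hfun :: "real^'d^'d \<Rightarrow> real \<Rightarrow> real^'d \<Rightarrow> int^'d \<Rightarrow> real" where
  "hfun P eps \<rho> x = (\<Sum>i\<in>UNIV. \<Prod>j\<in>UNIV. (1 + eps * Gmat P $j$i / \<rho>$i) ^ nat (x$j))"

definition Rcal :: "real^'d^'d \<Rightarrow> real^'d \<Rightarrow> real" where
  "Rcal P \<rho> = Max (range (\<lambda>i. (\<Sum>j\<in>UNIV. \<rho>$j * P$j$i) / \<rho>$i))"

text \<open>x_rho as an extended real (it is +infinity when R(rho) = 0).\<close>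
definition xrho :: "real^'d^'d \<Rightarrow> real^'d \<Rightarrow> ereal" where
  "xrho P \<rho> = Sup (ereal ` {x. 0 < x \<and> ln (1 + x) \<ge> Rcal P \<rho> * x})"

definition walk_prob :: "real^'d^'d \<Rightarrow> 'd list \<Rightarrow> real" where
  "walk_prob P ws = (\<Prod>k<length ws - 1. P $ (ws!k) $ (ws!(Suc k)))"

text \<open>Q_ij: probability that the chain on {0,...,d} with transitions p_ij (0 absorbing),
  started at i, ever visits j (time 0 included).\<close>
definition Qhit :: "real^'d^'d \<Rightarrow> 'd \<Rightarrow> 'd \<Rightarrow> real" where
  "Qhit P i j = (if i = j then 1 else
     (\<Sum>n. \<Sum>xs\<in>{xs. length xs = n \<and> j \<notin> set xs}. walk_prob P (i # xs @ [j])))"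

definition gvec :: "real^'d^'d \<Rightarrow> real^'d \<Rightarrow> 'd \<Rightarrow> real^'d" where
  "gvec P \<gamma> i = (\<chi> j. ln (1 + Qhit P j i * \<gamma>$i))"

definition Gamma_set :: "real^'d^'d \<Rightarrow> (real^'d) set" where
  "Gamma_set P = {\<gamma>. (\<forall>i. 0 \<le> \<gamma>$i) \<and>
     (\<forall>i. \<forall>v::real^'d. (\<forall>k. 0 \<le> v$k) \<and> v \<noteq> 0 \<and> v$i = 0 \<longrightarrow>
        gvec P \<gamma> i \<bullet> v < Max (range (\<lambda>j. gvec P \<gamma> j \<bullet> v)))}"

definition at_infty_lattice :: "(int^'d) filter" where
  "at_infty_lattice = inf (filtercomap (\<lambda>x. \<Sum>k\<in>UNIV. \<bar>x$k\<bar>) at_top) (principal nonneg_lattice)"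

end

theory Submission
  imports Defs
begin

text \<open>Write \<open>h = (\<Sum>i. h i)\<close> with \<open>h i x = (\<Prod>j. (1 + \<epsilon> * G j i / \<rho> i) ^ x j)\<close>. Since
  \<open>G = I + P * G\<close>, a service at a queue \<open>k \<noteq> i\<close> leaves \<open>h i\<close> unchanged on average, arrivals
  contribute \<open>\<epsilon> * \<nu> i / \<rho> i\<close> (as \<open>\<nu> = \<lambda> * G\<close>), and a service at a nonempty queue \<open>i\<close>
  contributes \<open>- \<epsilon> * \<mu> i / (\<rho> i + \<epsilon> * G i i)\<close>. So \<open>L h / h\<close> is the average, with weights
  \<open>h i / h\<close>, of the numbers \<open>- \<epsilon> * m i\<close>, where \<open>m i = \<mu> i / (\<rho> i + \<epsilon> * G i i) - \<nu> i / \<rho> i\<close>,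
  plus nonnegative excesses at the empty queues. Along the axis of the smallest \<open>m i\<close> the
  ratio is at least \<open>- \<epsilon> * min m\<close>. Conversely, \<open>Q j i = G j i / G i i\<close> gives
  \<open>ln (h i x) = gvec \<gamma> i \<bullet> x\<close> for \<open>\<gamma> i = \<epsilon> * G i i / \<rho> i\<close>, so \<open>\<gamma> \<in> \<Gamma>\<close> makes \<open>h i\<close>
  exponentially small against \<open>h\<close> wherever \<open>x i = 0\<close>, and the excesses vanish as \<open>|x| \<rightarrow> \<infinity>\<close>.
  Finally \<open>\<gamma> \<in> \<Gamma>\<close> holds when every \<open>\<gamma> i < x\<^sub>\<rho>\<close>: by concavity \<open>R(\<rho>) * t \<le> ln (1 + t)\<close> on
  the relevant range, and for \<open>w = v * G\<close> with \<open>v i = 0\<close> one has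
  \<open>w i = (w * P) i \<le> R(\<rho>) * \<rho> i * max\<^sub>j (w j / \<rho> j)\<close>, so queue \<open>i\<close> loses to the maximiser.\<close>

section \<open>The Green matrix of a transient routing chain\<close>

locale transient_routing =
  fixes P :: "real^'d^'d" and \<rho> :: "real^'d"
  assumes P_nonneg: "\<forall>i j. 0 \<le> P$i$j"
    and P_diag: "\<forall>i. P$i$i = 0"
    and P_sub: "\<forall>i. (\<Sum>j\<in>UNIV. P$i$j) \<le> 1"
    and rho_pos: "\<forall>i. 0 < \<rho>$i"
    and rho_sub: "\<forall>i. (\<Sum>j\<in>UNIV. \<rho>$j * P$j$i) < \<rho>$i"
begin

abbreviation G :: "real^'d^'d" where "G \<equiv> Gmat P"

lemma subharmonic_nonneg_eq_zero:
  fixes x :: "'d \<Rightarrow> real"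
  assumes subharmonic: "\<And>k. x k \<le> (\<Sum>l\<in>UNIV. P$k$l * x l)" and nonneg: "\<And>k. 0 \<le> x k"
  shows "x k = 0"
proof (rule ccontr)
  assume "x k \<noteq> 0"
  with nonneg[of k] have xk: "0 < x k" by linarith
  have "(\<Sum>k\<in>UNIV. \<rho>$k * x k) \<le> (\<Sum>k\<in>UNIV. \<rho>$k * (\<Sum>l\<in>UNIV. P$k$l * x l))"
    by (rule sum_mono) (use rho_pos subharmonic in \<open>auto intro: mult_left_mono less_imp_le\<close>)
  also have "\<dots> = (\<Sum>l\<in>UNIV. (\<Sum>k\<in>UNIV. \<rho>$k * P$k$l) * x l)"
    unfolding sum_distrib_left sum_distrib_right by (subst sum.swap) (simp add: mult.assoc)
  also have "\<dots> < (\<Sum>l\<in>UNIV. \<rho>$l * x l)"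
  proof (rule sum_strict_mono_ex1)
    show "\<forall>l\<in>UNIV. (\<Sum>k\<in>UNIV. \<rho>$k * P$k$l) * x l \<le> \<rho>$l * x l"
      using rho_sub nonneg by (auto intro: mult_right_mono less_imp_le)
    show "\<exists>l\<in>UNIV. (\<Sum>k\<in>UNIV. \<rho>$k * P$k$l) * x l < \<rho>$l * x l"
      using rho_sub xk by (auto intro: mult_strict_right_mono)
  qed simp
  finally show False by simp
qed

lemma harmonic_eq_zero:
  fixes x :: "'d \<Rightarrow> real"
  assumes harmonic: "\<And>k. x k \<noteq> 0 \<Longrightarrow> x k = (\<Sum>l\<in>UNIV. P$k$l * x l)"
  shows "x k = 0"
proof -
  have "\<bar>x k\<bar> \<le> (\<Sum>l\<in>UNIV. P$k$l * \<bar>x l\<bar>)" for k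
  proof (cases "x k = 0")
    case True
    then show ?thesis using P_nonneg by (simp add: sum_nonneg)
  next
    case False
    have "\<bar>x k\<bar> = \<bar>\<Sum>l\<in>UNIV. P$k$l * x l\<bar>" using harmonic[OF False] by simp
    also have "\<dots> \<le> (\<Sum>l\<in>UNIV. P$k$l * \<bar>x l\<bar>)"
      using P_nonneg by (intro order.trans[OF sum_abs]) (simp add: abs_mult)
    finally show ?thesis .
  qed
  then have "\<bar>x k\<bar> = 0" by (rule subharmonic_nonneg_eq_zero[of "\<lambda>k. \<bar>x k\<bar>"]) auto
  then show ?thesis by simp
qed

lemma invertible_I_minus_P: "invertible (mat 1 - P)"
proof -
  have "x = 0" if "(mat 1 - P) *v x = 0" for x :: "real^'d"
  proof -
    have harmonic: "x$k = (\<Sum>l\<in>UNIV. P$k$l * x$l)" for k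
    proof -
      have "((mat 1 - P) *v x)$k = 0" using that by simp
      then show ?thesis
        by (simp add: matrix_vector_mult_def mat_def algebra_simps sum_subtractf
            if_distrib[where f="\<lambda>t. _ * t"] cong: if_cong)
    qed
    have "x$k = 0" for k by (rule harmonic_eq_zero[of "\<lambda>k. x$k"]) (rule harmonic)
    then show ?thesis by (simp add: vec_eq_iff)
  qed
  then obtain B where "B ** (mat 1 - P) = mat 1"
    using matrix_left_invertible_ker by blast
  then show ?thesis unfolding invertible_def using matrix_left_right_inverse by blast
qed

lemma Gmat_inverse: "(mat 1 - P) ** G = mat 1" "G ** (mat 1 - P) = mat 1"
  using someI_ex[OF invertible_I_minus_P[unfolded invertible_def]]
  unfolding Gmat_def matrix_inv_def by auto

lemma Gmat_eq_I_plus_P_Gmat: "G$k$j = (if k = j then 1 else 0) + (\<Sum>l\<in>UNIV. P$k$l * G$l$j)"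
proof -
  have "((mat 1 - P) ** G)$k$j = (if k = j then 1 else 0)" using Gmat_inverse(1) by (simp add: mat_def)
  moreover have "((mat 1 - P) ** G)$k$j = G$k$j - (\<Sum>l\<in>UNIV. P$k$l * G$l$j)"
    by (simp add: matrix_matrix_mult_def mat_def left_diff_distrib sum_subtractf
        if_distrib[where f="\<lambda>t. t * _"] cong: if_cong)
  ultimately show ?thesis by simp
qed

lemma Gmat_eq_I_plus_Gmat_P: "G$k$j = (if k = j then 1 else 0) + (\<Sum>l\<in>UNIV. G$k$l * P$l$j)"
proof -
  have "(G ** (mat 1 - P))$k$j = (if k = j then 1 else 0)" using Gmat_inverse(2) by (simp add: mat_def)
  moreover have "(G ** (mat 1 - P))$k$j = G$k$j - (\<Sum>l\<in>UNIV. G$k$l * P$l$j)"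
    by (simp add: matrix_matrix_mult_def mat_def right_diff_distrib sum_subtractf
        if_distrib[where f="\<lambda>t. _ * t"] cong: if_cong)
  ultimately show ?thesis by simp
qed

lemma Gmat_nonneg: "0 \<le> G$k$j"
proof -
  have "max 0 (- G$k$j) \<le> (\<Sum>l\<in>UNIV. P$k$l * max 0 (- G$l$j))" for k
  proof -
    have "- G$k$j \<le> (\<Sum>l\<in>UNIV. P$k$l * (- G$l$j))"
      by (subst Gmat_eq_I_plus_P_Gmat) (simp add: sum_negf)
    also have "\<dots> \<le> (\<Sum>l\<in>UNIV. P$k$l * max 0 (- G$l$j))"
      using P_nonneg by (intro sum_mono mult_left_mono) auto
    finally show ?thesis using P_nonneg by (simp add: sum_nonneg)
  qed
  then have "max 0 (- G$k$j) = 0" by (rule subharmonic_nonneg_eq_zero[of "\<lambda>k. max 0 (- G$k$j)"]) auto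
  then show ?thesis by simp
qed

lemma Gmat_diag_ge_1: "1 \<le> G$j$j"
  using P_nonneg Gmat_nonneg by (subst Gmat_eq_I_plus_P_Gmat) (simp add: sum_nonneg)

lemma Gmat_le_diag: "G$k$j \<le> G$j$j"
proof -
  have "max 0 (G$k$j - G$j$j) \<le> (\<Sum>l\<in>UNIV. P$k$l * max 0 (G$l$j - G$j$j))" for k
  proof (cases "k = j")
    case False
    have "G$k$j - G$j$j = (\<Sum>l\<in>UNIV. P$k$l * G$l$j) - G$j$j"
      using False by (subst Gmat_eq_I_plus_P_Gmat) simp
    also have "\<dots> \<le> (\<Sum>l\<in>UNIV. P$k$l * G$l$j) - (\<Sum>l\<in>UNIV. P$k$l) * G$j$j"
      using P_sub Gmat_diag_ge_1[of j] by (intro diff_left_mono) (auto intro: mult_left_le_one_le)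
    also have "\<dots> = (\<Sum>l\<in>UNIV. P$k$l * (G$l$j - G$j$j))"
      by (simp add: sum_distrib_right right_diff_distrib sum_subtractf)
    also have "\<dots> \<le> (\<Sum>l\<in>UNIV. P$k$l * max 0 (G$l$j - G$j$j))"
      using P_nonneg by (intro sum_mono mult_left_mono) auto
    finally show ?thesis using P_nonneg by (simp add: sum_nonneg)
  qed (use P_nonneg in \<open>simp add: sum_nonneg\<close>)
  then have "max 0 (G$k$j - G$j$j) = 0"
    by (rule subharmonic_nonneg_eq_zero[of "\<lambda>k. max 0 (G$k$j - G$j$j)"]) auto
  then show ?thesis by simp
qed

end

section \<open>Hitting probabilities\<close>

definition lists_avoiding :: "'d \<Rightarrow> nat \<Rightarrow> 'd list set" where
  "lists_avoiding j n = {xs. length xs = n \<and> j \<notin> set xs}"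

definition first_passage :: "real^'d^'d \<Rightarrow> 'd \<Rightarrow> nat \<Rightarrow> 'd \<Rightarrow> real" where
  "first_passage P j n k = (\<Sum>xs\<in>lists_avoiding j n. walk_prob P (k # xs @ [j]))"

lemma Qhit_eq_suminf_first_passage: "k \<noteq> j \<Longrightarrow> Qhit P k j = (\<Sum>n. first_passage P j n k)"
  by (simp add: Qhit_def first_passage_def lists_avoiding_def)

lemma walk_prob_Cons_Cons: "walk_prob P (a # b # ws) = P$a$b * walk_prob P (b # ws)"
  unfolding walk_prob_def by (simp del: prod.lessThan_Suc add: prod.lessThan_Suc_shift)

lemma lists_avoiding_Suc:
  "lists_avoiding j (Suc n) = (\<lambda>(l, xs). l # xs) ` ((UNIV - {j}) \<times> lists_avoiding j n)"
  unfolding lists_avoiding_def by (auto simp: length_Suc_conv image_iff)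

lemma first_passage_0: "first_passage P j 0 k = P$k$j"
proof -
  have "lists_avoiding j 0 = {[]}" unfolding lists_avoiding_def by auto
  then show ?thesis unfolding first_passage_def walk_prob_def by simp
qed

lemma first_passage_Suc:
  "first_passage P (j::'d::finite) (Suc n) k = (\<Sum>l\<in>UNIV - {j}. P$k$l * first_passage P j n l)"
proof -
  have inj: "inj_on (\<lambda>(l, xs). l # xs) ((UNIV - {j}) \<times> lists_avoiding j n)"
    by (auto simp: inj_on_def)
  have "first_passage P j (Suc n) k
      = (\<Sum>(l, xs)\<in>(UNIV - {j}) \<times> lists_avoiding j n. walk_prob P (k # (l # xs) @ [j]))"
    unfolding first_passage_def lists_avoiding_Suc
    by (subst sum.reindex[OF inj]) (simp add: case_prod_unfold)
  also have "\<dots> = (\<Sum>l\<in>UNIV - {j}. \<Sum>xs\<in>lists_avoiding j n. P$k$l * walk_prob P (l # xs @ [j]))"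
    by (subst sum.cartesian_product[symmetric]) (simp add: walk_prob_Cons_Cons)
  also have "\<dots> = (\<Sum>l\<in>UNIV - {j}. P$k$l * first_passage P j n l)"
    unfolding first_passage_def by (simp add: sum_distrib_left)
  finally show ?thesis .
qed

context transient_routing begin

lemma walk_prob_nonneg: "0 \<le> walk_prob P ws"
  unfolding walk_prob_def using P_nonneg by (auto intro: prod_nonneg)

lemma first_passage_nonneg: "0 \<le> first_passage P j n k"
  unfolding first_passage_def by (intro sum_nonneg walk_prob_nonneg)

text \<open>The ratios \<open>G$k$j / G$j$j\<close> solve the first-passage equation to \<open>j\<close>, whose minimal
  nonnegative solution is the hitting probability; transience makes the solution unique.\<close>

lemma Gmat_ratio_first_passage_eq:
  assumes "k \<noteq> j"
  shows "G$k$j / G$j$j = P$k$j + (\<Sum>l\<in>UNIV - {j}. P$k$l * (G$l$j / G$j$j))"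
proof -
  have "G$k$j = (\<Sum>l\<in>UNIV. P$k$l * G$l$j)" using assms by (subst Gmat_eq_I_plus_P_Gmat) simp
  also have "\<dots> = P$k$j * G$j$j + (\<Sum>l\<in>UNIV - {j}. P$k$l * G$l$j)"
    by (simp add: sum.remove[of UNIV j])
  finally have "G$k$j / G$j$j = P$k$j * G$j$j / G$j$j + (\<Sum>l\<in>UNIV - {j}. P$k$l * G$l$j) / G$j$j"
    by (simp add: add_divide_distrib)
  then show ?thesis using Gmat_diag_ge_1[of j] by (simp add: sum_divide_distrib)
qed

lemma first_passage_partial_sum_le:
  "k \<noteq> j \<Longrightarrow> (\<Sum>n\<le>N. first_passage P j n k) \<le> G$k$j / G$j$j"
proof (induction N arbitrary: k)
  case 0
  then show ?case
    using Gmat_ratio_first_passage_eq[of k j] P_nonneg Gmat_nonneg Gmat_diag_ge_1[of j]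
    by (simp add: first_passage_0 sum_nonneg)
next
  case (Suc N)
  have "(\<Sum>n\<le>Suc N. first_passage P j n k)
      = P$k$j + (\<Sum>l\<in>UNIV - {j}. P$k$l * (\<Sum>n\<le>N. first_passage P j n l))"
    by (simp del: sum.atMost_Suc add: sum.atMost_Suc_shift first_passage_0 first_passage_Suc
        sum_distrib_left sum.swap[of _ "{..N}"])
  also have "\<dots> \<le> P$k$j + (\<Sum>l\<in>UNIV - {j}. P$k$l * (G$l$j / G$j$j))"
    using Suc.IH P_nonneg by (intro add_left_mono sum_mono mult_left_mono) auto
  also have "\<dots> = G$k$j / G$j$j" using Gmat_ratio_first_passage_eq[OF Suc.prems] by simp
  finally show ?case .
qed

lemma summable_first_passage: "summable (\<lambda>n. first_passage P j n k)"
proof -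
  have off_target: "summable (\<lambda>n. first_passage P j n l)" if "l \<noteq> j" for l
    by (rule bounded_imp_summable[OF first_passage_nonneg first_passage_partial_sum_le[OF that]])
  have "summable (\<lambda>n. first_passage P j (Suc n) k)"
    unfolding first_passage_Suc by (intro summable_sum summable_mult off_target) auto
  then show ?thesis using summable_Suc_iff by blast
qed

lemma Qhit_Gmat: "Qhit P k j * G$j$j = G$k$j"
proof -
  define q where "q k = (if k = j then 0 else Qhit P k j - G$k$j / G$j$j)" for k
  have "q k = (\<Sum>l\<in>UNIV. P$k$l * q l)" if "q k \<noteq> 0" for k
  proof -
    have kj: "k \<noteq> j" using that by (auto simp: q_def)
    have tail: "(\<Sum>n. first_passage P j (Suc n) k) = (\<Sum>l\<in>UNIV - {j}. P$k$l * (\<Sum>n. first_passage P j n l))"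
      by (simp add: first_passage_Suc suminf_sum summable_mult summable_first_passage suminf_mult)
    have "Qhit P k j = first_passage P j 0 k + (\<Sum>n. first_passage P j (Suc n) k)"
      using suminf_split_head[OF summable_first_passage] kj
      by (simp add: Qhit_eq_suminf_first_passage)
    also have "\<dots> = P$k$j + (\<Sum>l\<in>UNIV - {j}. P$k$l * Qhit P l j)"
      unfolding tail first_passage_0 by (simp add: Qhit_eq_suminf_first_passage)
    finally have "q k = (\<Sum>l\<in>UNIV - {j}. P$k$l * (Qhit P l j - G$l$j / G$j$j))"
      using Gmat_ratio_first_passage_eq[OF kj] kj
      by (simp add: q_def right_diff_distrib sum_subtractf)
    also have "\<dots> = (\<Sum>l\<in>UNIV. P$k$l * q l)"
      by (auto simp: q_def sum.remove[of UNIV j] intro!: sum.cong)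
    finally show ?thesis .
  qed
  then have "q k = 0" by (rule harmonic_eq_zero)
  then show ?thesis
  proof (cases "k = j")
    case False
    with \<open>q k = 0\<close> show ?thesis using Gmat_diag_ge_1[of j] by (simp add: q_def)
  qed (simp add: Qhit_def)
qed

end

section \<open>The generator on the nonnegative lattice\<close>

lemma sum_delta_weighted:
  fixes g :: "'a \<Rightarrow> 'b::semiring_0"
  assumes "finite A"
  shows "(\<Sum>z\<in>A. (\<Sum>i\<in>I. if z = a i then c i else 0) * g z) = (\<Sum>i\<in>I. if a i \<in> A then c i * g (a i) else 0)"
proof -
  have "(\<Sum>z\<in>A. (\<Sum>i\<in>I. if z = a i then c i else 0) * g z) = (\<Sum>z\<in>A. \<Sum>i\<in>I. if z = a i then c i * g z else 0)"
    unfolding sum_distrib_right by (intro sum.cong refl) simp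
  also have "\<dots> = (\<Sum>i\<in>I. \<Sum>z\<in>A. if z = a i then c i * g z else 0)"
    by (rule sum.swap)
  finally show ?thesis by (simp add: sum.delta[OF assms])
qed

lemma sum_delta_weighted2:
  fixes g :: "'a \<Rightarrow> 'b::semiring_0"
  assumes "finite A"
  shows "(\<Sum>z\<in>A. (\<Sum>i\<in>I. \<Sum>j\<in>J. if z = a i j then c i j else 0) * g z)
       = (\<Sum>i\<in>I. \<Sum>j\<in>J. if a i j \<in> A then c i j * g (a i j) else 0)"
proof -
  have "(\<Sum>z\<in>A. (\<Sum>i\<in>I. \<Sum>j\<in>J. if z = a i j then c i j else 0) * g z)
      = (\<Sum>i\<in>I. \<Sum>z\<in>A. (\<Sum>j\<in>J. if z = a i j then c i j else 0) * g z)"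
    unfolding sum_distrib_right by (rule sum.swap)
  then show ?thesis by (simp only: sum_delta_weighted[OF assms])
qed

lemma jrate_diff_eq:
  "jrate lam mu P (z - y) =
     (\<Sum>i\<in>UNIV. if z = y + axis i 1 then lam$i else 0)
   + (\<Sum>i\<in>UNIV. if z = y - axis i 1 then mu$i * exit_prob P i else 0)
   + (\<Sum>i\<in>UNIV. \<Sum>j\<in>UNIV. if z = y + axis j 1 - axis i 1 then (if j \<noteq> i then mu$i * P$i$j else 0) else 0)"
  unfolding jrate_def by (intro arg_cong2[where f="(+)"] sum.cong refl) (auto simp: algebra_simps)

lemma add_axis_in_nonneg_lattice: "y \<in> nonneg_lattice \<Longrightarrow> y + axis i 1 \<in> nonneg_lattice"
  by (simp add: nonneg_lattice_def axis_def)

lemma diff_axis_in_nonneg_lattice_iff: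
  "y \<in> nonneg_lattice \<Longrightarrow> y - axis i 1 \<in> nonneg_lattice \<longleftrightarrow> 0 < y$i"
  unfolding nonneg_lattice_def axis_def by (force simp: not_le)

lemma move_in_nonneg_lattice_iff:
  "y \<in> nonneg_lattice \<Longrightarrow> j \<noteq> i \<Longrightarrow> y + axis j 1 - axis i 1 \<in> nonneg_lattice \<longleftrightarrow> 0 < y$i"
  unfolding nonneg_lattice_def axis_def by (force simp: not_le)

lemma jgen_eq:
  fixes y :: "int^'d::finite"
  assumes y: "y \<in> nonneg_lattice"
  shows "jgen lam mu P f y =
     (\<Sum>i\<in>UNIV. lam$i * (f (y + axis i 1) - f y))
   + (\<Sum>i\<in>UNIV. if 0 < y$i then mu$i * exit_prob P i * (f (y - axis i 1) - f y) else 0)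
   + (\<Sum>i\<in>UNIV. \<Sum>j\<in>UNIV. if j \<noteq> i \<and> 0 < y$i
        then mu$i * P$i$j * (f (y + axis j 1 - axis i 1) - f y) else 0)"
    (is "_ = ?rhs")
proof -
  define N where "N = range (\<lambda>i. y + axis i 1) \<union> range (\<lambda>i. y - axis i 1)
    \<union> range (\<lambda>(i, j). y + axis j 1 - axis i 1)"
  define F where "F = nonneg_lattice \<inter> N"
  have F: "finite F" unfolding F_def N_def by auto
  have "jrate lam mu P (z - y) = 0" if "z \<notin> N" for z
    using that unfolding jrate_diff_eq N_def by (simp add: image_iff)
  then have support: "{z\<in>nonneg_lattice. jrate lam mu P (z - y) \<noteq> 0} \<subseteq> F"
    unfolding F_def by blast
  have "jgen lam mu P f y = (\<Sum>z\<in>F. jrate lam mu P (z - y) * (f z - f y))"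
    unfolding jgen_def by (rule sum.mono_neutral_left[OF F support]) (auto simp: F_def)
  also have "\<dots> =
     (\<Sum>i\<in>UNIV. if y + axis i 1 \<in> F then lam$i * (f (y + axis i 1) - f y) else 0)
   + (\<Sum>i\<in>UNIV. if y - axis i 1 \<in> F then mu$i * exit_prob P i * (f (y - axis i 1) - f y) else 0)
   + (\<Sum>i\<in>UNIV. \<Sum>j\<in>UNIV. if y + axis j 1 - axis i 1 \<in> F
        then (if j \<noteq> i then mu$i * P$i$j else 0) * (f (y + axis j 1 - axis i 1) - f y) else 0)"
    unfolding jrate_diff_eq distrib_right sum.distrib
    by (simp only: sum_delta_weighted[OF F] sum_delta_weighted2[OF F])
  also have "\<dots> = ?rhs"
  proof -
    have in_F: "z \<in> F \<longleftrightarrow> z \<in> nonneg_lattice" if "z \<in> N" for z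
      using that unfolding F_def by blast
    have in_N: "y + axis i 1 \<in> N" "y - axis i 1 \<in> N" "y + axis j 1 - axis i 1 \<in> N" for i j
      unfolding N_def by (auto simp: image_iff)
    have move: "(if y + axis j 1 - axis i 1 \<in> nonneg_lattice then (if j \<noteq> i then mu$i * P$i$j else 0) * d else 0)
       = (if j \<noteq> i \<and> 0 < y$i then mu$i * P$i$j * d else 0)" for i j d
      by (cases "j = i") (simp_all add: move_in_nonneg_lattice_iff[OF y])
    show ?thesis
      by (simp add: in_F in_N add_axis_in_nonneg_lattice[OF y] diff_axis_in_nonneg_lattice_iff[OF y] move)
  qed
  finally show ?thesis .
qed

section \<open>The test function\<close>

definition real_vec :: "int^'d \<Rightarrow> real^'d" where
  "real_vec y = (\<chi> k. real_of_int (y$k))"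

context transient_routing begin

definition hfactor :: "real \<Rightarrow> 'd \<Rightarrow> 'd \<Rightarrow> real" where
  "hfactor eps k i = 1 + eps * G$k$i / \<rho>$i"

definition hterm :: "real \<Rightarrow> 'd \<Rightarrow> int^'d \<Rightarrow> real" where
  "hterm eps i x = (\<Prod>k\<in>UNIV. hfactor eps k i ^ nat (x$k))"

lemma hfun_eq_sum_hterm: "hfun P eps \<rho> x = (\<Sum>i\<in>UNIV. hterm eps i x)"
  unfolding hfun_def hterm_def hfactor_def ..

lemma hfactor_ge_1: "0 \<le> eps \<Longrightarrow> 1 \<le> hfactor eps k i"
  unfolding hfactor_def using Gmat_nonneg rho_pos by (simp add: divide_nonneg_pos)

lemma hfactor_pos: "0 \<le> eps \<Longrightarrow> 0 < hfactor eps k i"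
  using hfactor_ge_1[of eps k i] by linarith

lemma hterm_pos: "0 \<le> eps \<Longrightarrow> 0 < hterm eps i x"
  unfolding hterm_def using hfactor_pos by (auto intro!: prod_pos zero_less_power)

lemma hterm_add_axis:
  assumes "x \<in> nonneg_lattice"
  shows "hterm eps i (x + axis l 1) = hterm eps i x * hfactor eps l i"
proof -
  have "nat ((x + axis l 1)$k) = nat (x$k) + (if k = l then 1 else 0)" for k
    using assms by (simp add: nonneg_lattice_def axis_def nat_add_distrib)
  then have "hterm eps i (x + axis l 1)
      = (\<Prod>k\<in>UNIV. hfactor eps k i ^ nat (x$k) * (if k = l then hfactor eps k i else 1))"
    unfolding hterm_def by (intro prod.cong refl) (simp add: power_add)
  then show ?thesis unfolding hterm_def by (simp add: prod.distrib)
qed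

text \<open>The identity \<open>G = I + P G\<close> makes each product \<open>hterm eps i\<close> harmonic for the service
  at every queue \<open>k \<noteq> i\<close>.\<close>

lemma hfactor_service_balance:
  "exit_prob P k * (1 - hfactor eps k i) + (\<Sum>j\<in>UNIV. P$k$j * (hfactor eps j i - hfactor eps k i))
     = - (eps / \<rho>$i) * (if k = i then 1 else 0)"
proof -
  have "(\<Sum>j\<in>UNIV. P$k$j * hfactor eps j i)
      = (\<Sum>j\<in>UNIV. P$k$j) + eps / \<rho>$i * (\<Sum>j\<in>UNIV. P$k$j * G$j$i)"
    unfolding hfactor_def by (simp add: algebra_simps sum.distrib sum_distrib_left)
  also have "(\<Sum>j\<in>UNIV. P$k$j * G$j$i) = G$k$i - (if k = i then 1 else 0)"
    by (subst (2) Gmat_eq_I_plus_P_Gmat) simp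
  finally have balance: "(\<Sum>j\<in>UNIV. P$k$j * hfactor eps j i)
      = (\<Sum>j\<in>UNIV. P$k$j) + eps * (G$k$i - (if k = i then 1 else 0)) / \<rho>$i"
    by simp
  have "exit_prob P k * (1 - hfactor eps k i) + (\<Sum>j\<in>UNIV. P$k$j * (hfactor eps j i - hfactor eps k i))
      = 1 - hfactor eps k i - (\<Sum>j\<in>UNIV. P$k$j) + (\<Sum>j\<in>UNIV. P$k$j * hfactor eps j i)"
    unfolding exit_prob_def
    by (simp add: right_diff_distrib sum_subtractf sum_distrib_right[symmetric] algebra_simps)
  also have "\<dots> = - (eps / \<rho>$i) * (if k = i then 1 else 0)"
    unfolding balance by (simp add: hfactor_def diff_divide_distrib right_diff_distrib)
  finally show ?thesis .
qed

lemma hfun_departure_balance: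
  assumes z: "z \<in> nonneg_lattice"
  shows "exit_prob P k * (hfun P eps \<rho> z - hfun P eps \<rho> (z + axis k 1))
      + (\<Sum>j\<in>UNIV. P$k$j * (hfun P eps \<rho> (z + axis j 1) - hfun P eps \<rho> (z + axis k 1)))
      = - hterm eps k z * (eps / \<rho>$k)"
proof -
  have move: "hfun P eps \<rho> (z + axis j 1) - hfun P eps \<rho> (z + axis k 1)
      = (\<Sum>i\<in>UNIV. hterm eps i z * (hfactor eps j i - hfactor eps k i))" for j
    unfolding hfun_eq_sum_hterm hterm_add_axis[OF z] by (simp add: sum_subtractf[symmetric] right_diff_distrib)
  have leave: "hfun P eps \<rho> z - hfun P eps \<rho> (z + axis k 1) = (\<Sum>i\<in>UNIV. hterm eps i z * (1 - hfactor eps k i))"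
    unfolding hfun_eq_sum_hterm hterm_add_axis[OF z] by (simp add: sum_subtractf[symmetric] right_diff_distrib)
  have "(\<Sum>j\<in>UNIV. P$k$j * (\<Sum>i\<in>UNIV. hterm eps i z * (hfactor eps j i - hfactor eps k i)))
      = (\<Sum>i\<in>UNIV. hterm eps i z * (\<Sum>j\<in>UNIV. P$k$j * (hfactor eps j i - hfactor eps k i)))"
    unfolding sum_distrib_left by (subst sum.swap) (simp add: mult_ac)
  then have "exit_prob P k * (hfun P eps \<rho> z - hfun P eps \<rho> (z + axis k 1))
      + (\<Sum>j\<in>UNIV. P$k$j * (hfun P eps \<rho> (z + axis j 1) - hfun P eps \<rho> (z + axis k 1)))
      = (\<Sum>i\<in>UNIV. hterm eps i z * (exit_prob P k * (1 - hfactor eps k i)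
          + (\<Sum>j\<in>UNIV. P$k$j * (hfactor eps j i - hfactor eps k i))))"
    unfolding move leave by (simp add: distrib_left sum.distrib sum_distrib_left mult_ac)
  also have "\<dots> = - hterm eps k z * (eps / \<rho>$k)"
    by (simp add: hfactor_service_balance if_distrib[where f="\<lambda>t. _ * t"] cong: if_cong)
  finally show ?thesis .
qed

lemma hfun_pos: "0 \<le> eps \<Longrightarrow> 0 < hfun P eps \<rho> y"
  unfolding hfun_eq_sum_hterm using hterm_pos by (intro sum_pos) auto

lemma hterm_le_hfun: "0 \<le> eps \<Longrightarrow> hterm eps i y \<le> hfun P eps \<rho> y"
  unfolding hfun_eq_sum_hterm using hterm_pos by (intro member_le_sum) (auto intro: less_imp_le)

lemma sum_hterm_div_hfun: "0 \<le> eps \<Longrightarrow> (\<Sum>i\<in>UNIV. hterm eps i y / hfun P eps \<rho> y) = 1"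
  using hfun_pos[of eps y] by (simp add: sum_divide_distrib[symmetric] hfun_eq_sum_hterm)

lemma gvec_eq_ln_hfactor:
  assumes "0 \<le> eps"
  shows "gvec P (\<chi> i. eps * G$i$i / \<rho>$i) i = (\<chi> k. ln (hfactor eps k i))"
proof -
  have "Qhit P k i * (eps * G$i$i / \<rho>$i) = eps * G$k$i / \<rho>$i" for k
    using Qhit_Gmat[of k i] by (metis mult.left_commute times_divide_eq_right)
  then have "gvec P (\<chi> i. eps * G$i$i / \<rho>$i) i $ k = ln (hfactor eps k i)" for k
    unfolding gvec_def hfactor_def by (simp only: vec_lambda_beta)
  then show ?thesis by (simp add: vec_eq_iff)
qed

lemma hterm_eq_exp:
  assumes y: "y \<in> nonneg_lattice" and eps: "0 \<le> eps"
  shows "hterm eps i y = exp (gvec P (\<chi> i. eps * G$i$i / \<rho>$i) i \<bullet> real_vec y)"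
proof -
  have "hfactor eps k i ^ nat (y$k) = exp (ln (hfactor eps k i) * real_of_int (y$k))" for k
  proof -
    have "0 \<le> y$k" using y by (simp add: nonneg_lattice_def)
    then have k: "real_of_int (y$k) = real (nat (y$k))" by simp
    have "hfactor eps k i ^ nat (y$k) = exp (ln (hfactor eps k i)) ^ nat (y$k)"
      by (simp only: exp_ln[OF hfactor_pos[OF eps]])
    also have "\<dots> = exp (real (nat (y$k)) * ln (hfactor eps k i))"
      by (rule exp_of_nat_mult[symmetric])
    finally show ?thesis unfolding k by (simp only: mult.commute)
  qed
  then have "hterm eps i y = exp (\<Sum>k\<in>UNIV. ln (hfactor eps k i) * real_of_int (y$k))"
    unfolding hterm_def by (simp add: exp_sum)
  then show ?thesis unfolding gvec_eq_ln_hfactor[OF eps] real_vec_def inner_vec_def by simp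
qed

end

section \<open>The drift of the test function\<close>

locale jackson_network = transient_routing P \<rho> for P :: "real^'d^'d" and \<rho> :: "real^'d" +
  fixes lam mu \<nu> :: "real^'d"
  assumes lam_nonneg: "\<forall>i. 0 \<le> lam$i"
    and mu_pos: "\<forall>i. 0 < mu$i"
    and traffic: "\<forall>j. \<nu>$j = lam$j + (\<Sum>i\<in>UNIV. \<nu>$i * P$i$j)"
begin

lemma nu_eq_lam_Gmat: "\<nu>$i = (\<Sum>k\<in>UNIV. lam$k * G$k$i)"
proof -
  have PG: "(\<Sum>k\<in>UNIV. P$l$k * G$k$i) = G$l$i - (if l = i then 1 else 0)" for l
    by (subst (2) Gmat_eq_I_plus_P_Gmat) simp
  have "(\<Sum>k\<in>UNIV. lam$k * G$k$i) = (\<Sum>k\<in>UNIV. (\<nu>$k - (\<Sum>l\<in>UNIV. \<nu>$l * P$l$k)) * G$k$i)"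
    using traffic by (intro sum.cong refl) (metis add_diff_cancel_right')
  also have "\<dots> = (\<Sum>k\<in>UNIV. \<nu>$k * G$k$i) - (\<Sum>l\<in>UNIV. \<nu>$l * (\<Sum>k\<in>UNIV. P$l$k * G$k$i))"
  proof -
    have "(\<Sum>k\<in>UNIV. (\<Sum>l\<in>UNIV. \<nu>$l * P$l$k) * G$k$i) = (\<Sum>l\<in>UNIV. \<nu>$l * (\<Sum>k\<in>UNIV. P$l$k * G$k$i))"
      unfolding sum_distrib_left sum_distrib_right by (subst sum.swap) (simp add: mult.assoc)
    then show ?thesis by (simp add: left_diff_distrib sum_subtractf)
  qed
  also have "\<dots> = \<nu>$i"
    by (simp add: PG right_diff_distrib sum_subtractf if_distrib[where f="\<lambda>t. _ * t"] cong: if_cong)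
  finally show ?thesis by simp
qed

lemma nu_nonneg: "0 \<le> \<nu>$i"
  unfolding nu_eq_lam_Gmat using lam_nonneg Gmat_nonneg by (auto intro: sum_nonneg)

lemma jgen_hfun_arrivals:
  assumes "y \<in> nonneg_lattice"
  shows "(\<Sum>k\<in>UNIV. lam$k * (hfun P eps \<rho> (y + axis k 1) - hfun P eps \<rho> y))
       = (\<Sum>i\<in>UNIV. hterm eps i y * (eps * \<nu>$i / \<rho>$i))"
proof -
  have "hfun P eps \<rho> (y + axis k 1) - hfun P eps \<rho> y = (\<Sum>i\<in>UNIV. hterm eps i y * (eps * G$k$i / \<rho>$i))" for k
    unfolding hfun_eq_sum_hterm hterm_add_axis[OF assms]
    by (simp add: hfactor_def sum_subtractf[symmetric] algebra_simps)
  then have "(\<Sum>k\<in>UNIV. lam$k * (hfun P eps \<rho> (y + axis k 1) - hfun P eps \<rho> y))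
      = (\<Sum>k\<in>UNIV. \<Sum>i\<in>UNIV. lam$k * (hterm eps i y * (eps * G$k$i / \<rho>$i)))"
    by (simp add: sum_distrib_left)
  also have "\<dots> = (\<Sum>i\<in>UNIV. \<Sum>k\<in>UNIV. lam$k * (hterm eps i y * (eps * G$k$i / \<rho>$i)))"
    by (rule sum.swap)
  also have "\<dots> = (\<Sum>i\<in>UNIV. hterm eps i y * (eps / \<rho>$i) * (\<Sum>k\<in>UNIV. lam$k * G$k$i))"
    by (simp add: sum_distrib_left mult_ac)
  finally show ?thesis by (simp add: nu_eq_lam_Gmat[symmetric] mult.assoc)
qed

lemma jgen_hfun_service:
  assumes y: "y \<in> nonneg_lattice" and yk: "0 < y$k" and eps: "0 \<le> eps"
  shows "mu$k * exit_prob P k * (hfun P eps \<rho> (y - axis k 1) - hfun P eps \<rho> y)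
      + (\<Sum>j\<in>UNIV. if j \<noteq> k then mu$k * P$k$j * (hfun P eps \<rho> (y + axis j 1 - axis k 1) - hfun P eps \<rho> y) else 0)
      = - (hterm eps k y * (eps * mu$k / (\<rho>$k + eps * G$k$k)))"
proof -
  define z where "z = y - axis k 1"
  have z: "z \<in> nonneg_lattice" unfolding z_def using diff_axis_in_nonneg_lattice_iff[OF y] yk by simp
  have y_eq: "y = z + axis k 1" and move_eq: "y + axis j 1 - axis k 1 = z + axis j 1" for j
    unfolding z_def by (simp_all add: algebra_simps)
  have "(\<Sum>j\<in>UNIV. if j \<noteq> k then mu$k * P$k$j * (hfun P eps \<rho> (y + axis j 1 - axis k 1) - hfun P eps \<rho> y) else 0)
      = mu$k * (\<Sum>j\<in>UNIV. P$k$j * (hfun P eps \<rho> (z + axis j 1) - hfun P eps \<rho> (z + axis k 1)))"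
    unfolding sum_distrib_left move_eq unfolding y_eq using P_diag by (intro sum.cong refl) auto
  then have "mu$k * exit_prob P k * (hfun P eps \<rho> (y - axis k 1) - hfun P eps \<rho> y)
      + (\<Sum>j\<in>UNIV. if j \<noteq> k then mu$k * P$k$j * (hfun P eps \<rho> (y + axis j 1 - axis k 1) - hfun P eps \<rho> y) else 0)
      = mu$k * (exit_prob P k * (hfun P eps \<rho> z - hfun P eps \<rho> (z + axis k 1))
          + (\<Sum>j\<in>UNIV. P$k$j * (hfun P eps \<rho> (z + axis j 1) - hfun P eps \<rho> (z + axis k 1))))"
    unfolding z_def[symmetric] unfolding y_eq by (simp add: distrib_left)
  also have "\<dots> = - mu$k * hterm eps k z * (eps / \<rho>$k)"
    unfolding hfun_departure_balance[OF z] by simp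
  also have "\<dots> = - (hterm eps k y * (eps * mu$k / (\<rho>$k + eps * G$k$k)))"
  proof -
    have hy: "hterm eps k y = hterm eps k z * hfactor eps k k"
      using hterm_add_axis[OF z] by (simp add: y_eq)
    have a: "\<rho>$k + eps * G$k$k = hfactor eps k k * \<rho>$k"
      unfolding hfactor_def using rho_pos[rule_format, of k] by (simp add: field_simps)
    show ?thesis
      unfolding hy a using rho_pos[rule_format, of k] hfactor_pos[OF eps, of k k] by (simp add: field_simps)
  qed
  finally show ?thesis .
qed

lemma jgen_hfun_eq:
  assumes y: "y \<in> nonneg_lattice" and eps: "0 \<le> eps"
  shows "jgen lam mu P (hfun P eps \<rho>) y = (\<Sum>i\<in>UNIV. hterm eps i y *
    (eps * \<nu>$i / \<rho>$i - (if 0 < y$i then eps * mu$i / (\<rho>$i + eps * G$i$i) else 0)))"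
proof -
  let ?h = "hfun P eps \<rho>"
  have service: "(if 0 < y$k then mu$k * exit_prob P k * (?h (y - axis k 1) - ?h y) else 0)
     + (\<Sum>j\<in>UNIV. if j \<noteq> k \<and> 0 < y$k then mu$k * P$k$j * (?h (y + axis j 1 - axis k 1) - ?h y) else 0)
     = - (hterm eps k y * (if 0 < y$k then eps * mu$k / (\<rho>$k + eps * G$k$k) else 0))" for k
    using jgen_hfun_service[OF y _ eps, of k] by (cases "0 < y$k") simp_all
  show ?thesis
    unfolding jgen_eq[OF y] jgen_hfun_arrivals[OF y] add.assoc sum.distrib[symmetric] service
    by (simp add: right_diff_distrib sum_subtractf)
qed

definition drift_margin :: "real \<Rightarrow> 'd \<Rightarrow> real" where
  "drift_margin eps i = mu$i / (\<rho>$i + eps * G$i$i) - \<nu>$i / \<rho>$i"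

lemma jgen_hfun_ratio_eq:
  assumes y: "y \<in> nonneg_lattice" and eps: "0 \<le> eps"
  shows "jgen lam mu P (hfun P eps \<rho>) y / hfun P eps \<rho> y = (\<Sum>i\<in>UNIV. hterm eps i y / hfun P eps \<rho> y *
    (- eps * drift_margin eps i + (if 0 < y$i then 0 else eps * mu$i / (\<rho>$i + eps * G$i$i))))"
proof -
  have "- eps * drift_margin eps i + (if 0 < y$i then 0 else eps * mu$i / (\<rho>$i + eps * G$i$i))
      = eps * \<nu>$i / \<rho>$i - (if 0 < y$i then eps * mu$i / (\<rho>$i + eps * G$i$i) else 0)" for i
    by (simp add: drift_margin_def right_diff_distrib)
  then show ?thesis
    unfolding jgen_hfun_eq[OF y eps] sum_divide_distrib by simp
qed

end

section \<open>The limit superior of the drift ratio\<close>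

lemma eventually_at_infty_lattice:
  "eventually Q at_infty_lattice \<longleftrightarrow> (\<exists>N. \<forall>x\<in>nonneg_lattice. N \<le> (\<Sum>k\<in>UNIV. \<bar>x$k\<bar>) \<longrightarrow> Q x)"
  unfolding at_infty_lattice_def eventually_inf_principal eventually_filtercomap
    eventually_at_top_linorder
proof
  assume "\<exists>R. (\<exists>N. \<forall>n\<ge>N. R n) \<and> (\<forall>x. R (\<Sum>k\<in>UNIV. \<bar>x$k\<bar>) \<longrightarrow> x \<in> nonneg_lattice \<longrightarrow> Q x)"
  then show "\<exists>N. \<forall>x\<in>nonneg_lattice. N \<le> (\<Sum>k\<in>UNIV. \<bar>x$k\<bar>) \<longrightarrow> Q x" by blast
next
  assume "\<exists>N. \<forall>x\<in>nonneg_lattice. N \<le> (\<Sum>k\<in>UNIV. \<bar>x$k\<bar>) \<longrightarrow> Q x"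
  then show "\<exists>R. (\<exists>N. \<forall>n\<ge>N. R n) \<and> (\<forall>x. R (\<Sum>k\<in>UNIV. \<bar>x$k\<bar>) \<longrightarrow> x \<in> nonneg_lattice \<longrightarrow> Q x)"
    by (metis order_refl)
qed

lemma exp_neg_mult_le:
  fixes \<delta> e K n :: real
  assumes \<delta>: "0 < \<delta>" and e: "0 < e" and n: "K / (\<delta> * e) \<le> n"
  shows "exp (- \<delta> * n) * K \<le> e"
proof -
  have "K \<le> e * (\<delta> * n)" using \<delta> e n by (simp add: divide_le_eq mult_ac)
  also have "\<dots> \<le> e * exp (\<delta> * n)"
    using e by (intro mult_left_mono) (auto intro: order.trans[OF _ exp_ge_add_one_self])
  finally have "exp (- \<delta> * n) * K \<le> exp (- \<delta> * n) * (e * exp (\<delta> * n))"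
    by (intro mult_left_mono) auto
  also have "\<dots> = e" by (simp add: exp_minus field_simps)
  finally show ?thesis .
qed

definition simplex_face :: "'d::finite \<Rightarrow> (real^'d) set" where
  "simplex_face i = {v. (\<forall>k. 0 \<le> v$k) \<and> v$i = 0 \<and> (\<Sum>k\<in>UNIV. v$k) = 1}"

lemma compact_simplex_face: "compact (simplex_face (i::'d::finite))"
proof -
  have "closed (simplex_face i)" unfolding simplex_face_def
    by (intro closed_Collect_conj closed_Collect_all closed_Collect_le closed_Collect_eq continuous_intros)
  moreover have "norm v \<le> 1" if "v \<in> simplex_face i" for v :: "real^'d"
    using norm_le_l1_cart[of v] that unfolding simplex_face_def by simp
  then have "bounded (simplex_face i)" unfolding bounded_iff by blast
  ultimately show ?thesis by (simp add: compact_eq_bounded_closed)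
qed

lemma uniform_gap_on_simplex_face:
  fixes g :: "'d::finite \<Rightarrow> real^'d"
  assumes strict: "\<forall>v. (\<forall>k. 0 \<le> v$k) \<and> v \<noteq> 0 \<and> v$i = 0 \<longrightarrow> g i \<bullet> v < Max (range (\<lambda>j. g j \<bullet> v))"
  shows "\<exists>\<delta>>0. \<forall>v\<in>simplex_face i. \<exists>j. g i \<bullet> v + \<delta> \<le> g j \<bullet> v"
proof (cases "simplex_face i = {}")
  case True
  then show ?thesis by (intro exI[of _ 1]) auto
next
  case False
  define \<psi> where "\<psi> v = (\<Sum>j\<in>UNIV. max 0 (g j \<bullet> v - g i \<bullet> v))" for v :: "real^'d"
  have "continuous_on (simplex_face i) \<psi>" unfolding \<psi>_def by (intro continuous_intros)
  then obtain v0 where v0: "v0 \<in> simplex_face i" and min: "\<And>v. v \<in> simplex_face i \<Longrightarrow> \<psi> v0 \<le> \<psi> v"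
    using continuous_attains_inf[OF compact_simplex_face False] by blast
  have "0 < \<psi> v" if "v \<in> simplex_face i" for v
  proof -
    have "v \<noteq> 0" using that unfolding simplex_face_def by auto
    then have lt: "g i \<bullet> v < Max (range (\<lambda>j. g j \<bullet> v))" using strict that unfolding simplex_face_def by blast
    have "Max (range (\<lambda>j. g j \<bullet> v)) \<in> range (\<lambda>j. g j \<bullet> v)" by (rule Max_in) auto
    then obtain j where "Max (range (\<lambda>j. g j \<bullet> v)) = g j \<bullet> v" by blast
    with lt have "0 < max 0 (g j \<bullet> v - g i \<bullet> v)" by simp
    then show ?thesis unfolding \<psi>_def by (intro sum_pos2[of UNIV j]) auto
  qed
  then have \<delta>_pos: "0 < \<psi> v0 / CARD('d)" using v0 by simp
  show ?thesis
  proof (intro exI[of _ "\<psi> v0 / CARD('d)"] conjI ballI \<delta>_pos)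
    fix v assume v: "v \<in> simplex_face i"
    show "\<exists>j. g i \<bullet> v + \<psi> v0 / CARD('d) \<le> g j \<bullet> v"
    proof (rule ccontr)
      assume "\<not> ?thesis"
      then have lt: "g j \<bullet> v < g i \<bullet> v + \<psi> v0 / CARD('d)" for j by (simp add: not_le)
      have "max 0 (g j \<bullet> v - g i \<bullet> v) < \<psi> v0 / CARD('d)" for j
        using \<delta>_pos lt[of j] by (simp add: max_less_iff_conj)
      then have "\<psi> v < (\<Sum>j\<in>(UNIV::'d set). \<psi> v0 / CARD('d))"
        unfolding \<psi>_def by (intro sum_strict_mono_ex1) (auto intro: less_imp_le)
      with min[OF v] show False by simp
    qed
  qed
qed

lemma Gamma_set_uniform_gap:
  fixes P :: "real^'d^'d"
  assumes "\<gamma> \<in> Gamma_set P"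
  obtains \<delta> where "0 < \<delta>"
    and "\<And>i v. v \<in> simplex_face i \<Longrightarrow> \<exists>j. gvec P \<gamma> i \<bullet> v + \<delta> \<le> gvec P \<gamma> j \<bullet> v"
proof -
  have "\<forall>i. \<exists>\<delta>>0. \<forall>v\<in>simplex_face i. \<exists>j. gvec P \<gamma> i \<bullet> v + \<delta> \<le> gvec P \<gamma> j \<bullet> v"
    using assms unfolding Gamma_set_def by (blast intro: uniform_gap_on_simplex_face)
  from choice[OF this] obtain \<delta> where
    \<delta>: "\<forall>i. 0 < \<delta> i \<and> (\<forall>v\<in>simplex_face i. \<exists>j. gvec P \<gamma> i \<bullet> v + \<delta> i \<le> gvec P \<gamma> j \<bullet> v)"
    by blast
  show ?thesis
  proof (rule that)
    show "0 < Min (range \<delta>)" using \<delta> by simp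
  next
    fix i :: 'd and v assume "v \<in> simplex_face i"
    then obtain j where "gvec P \<gamma> i \<bullet> v + \<delta> i \<le> gvec P \<gamma> j \<bullet> v" using \<delta> by blast
    moreover have "Min (range \<delta>) \<le> \<delta> i" by simp
    ultimately show "\<exists>j. gvec P \<gamma> i \<bullet> v + Min (range \<delta>) \<le> gvec P \<gamma> j \<bullet> v"
      by (intro exI[of _ j]) linarith
  qed
qed

context transient_routing begin

lemma hterm_le_exp_hfun:
  assumes y: "y \<in> nonneg_lattice" and y_i: "y$i = 0" and eps: "0 \<le> eps"
    and gap: "\<And>v. v \<in> simplex_face i \<Longrightarrow>
      \<exists>j. gvec P (\<chi> i. eps * G$i$i / \<rho>$i) i \<bullet> v + \<delta> \<le> gvec P (\<chi> i. eps * G$i$i / \<rho>$i) j \<bullet> v"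
  shows "hterm eps i y \<le> exp (- \<delta> * (\<Sum>k\<in>UNIV. \<bar>y$k\<bar>)) * hfun P eps \<rho> y"
proof (cases "(\<Sum>k\<in>UNIV. \<bar>y$k\<bar>) = 0")
  case True
  then show ?thesis using hterm_le_hfun[OF eps] by simp
next
  case False
  let ?g = "gvec P (\<chi> i. eps * G$i$i / \<rho>$i)"
  define n where "n = real_of_int (\<Sum>k\<in>UNIV. \<bar>y$k\<bar>)"
  have y_nonneg: "0 \<le> y$k" for k using y by (simp add: nonneg_lattice_def)
  then have n_eq: "n = (\<Sum>k\<in>UNIV. real_vec y $ k)" unfolding n_def real_vec_def by simp
  have "0 \<le> n" unfolding n_def by (simp add: sum_nonneg)
  with False have n: "0 < n" unfolding n_def by linarith
  define v where "v = (1 / n) *\<^sub>R real_vec y"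
  have v_nth: "v$k = real_of_int (y$k) / n" for k unfolding v_def real_vec_def by simp
  have "\<forall>k. 0 \<le> v$k" "v$i = 0" using y_nonneg n y_i by (simp_all add: v_nth)
  moreover have "(\<Sum>k\<in>UNIV. v$k) = 1"
    using n n_eq unfolding v_nth sum_divide_distrib[symmetric] by (simp add: real_vec_def)
  ultimately have "v \<in> simplex_face i" unfolding simplex_face_def by blast
  then obtain j where j: "?g i \<bullet> v + \<delta> \<le> ?g j \<bullet> v" using gap by blast
  then have "n * (?g i \<bullet> ((1 / n) *\<^sub>R real_vec y) + \<delta>) \<le> n * (?g j \<bullet> ((1 / n) *\<^sub>R real_vec y))"
    using n unfolding v_def by (intro mult_left_mono) auto
  then have "?g i \<bullet> real_vec y + \<delta> * n \<le> ?g j \<bullet> real_vec y"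
    using n by (simp add: distrib_left mult.commute)
  then have "hterm eps i y \<le> exp (- \<delta> * n) * hterm eps j y"
    unfolding hterm_eq_exp[OF y eps] by (simp add: exp_add[symmetric])
  also have "\<dots> \<le> exp (- \<delta> * n) * hfun P eps \<rho> y"
    by (intro mult_left_mono hterm_le_hfun eps) simp
  finally show ?thesis unfolding n_def .
qed

end

context jackson_network begin

lemma jgen_hfun_ratio_ge_on_axis:
  assumes eps: "0 < eps" and margin: "\<forall>i. 0 \<le> drift_margin eps i"
    and i0: "drift_margin eps i0 = Min (range (drift_margin eps))" and n: "0 < n"
  defines "y \<equiv> \<chi> k. if k = i0 then n else 0"
  shows "- eps * Min (range (drift_margin eps)) \<le> jgen lam mu P (hfun P eps \<rho>) y / hfun P eps \<rho> y"
proof -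
  let ?m = "Min (range (drift_margin eps))"
  let ?w = "\<lambda>i. hterm eps i y / hfun P eps \<rho> y"
  have y: "y \<in> nonneg_lattice" and y_i0: "0 < y$i0" and y_other: "i \<noteq> i0 \<Longrightarrow> y$i = 0" for i
    unfolding y_def nonneg_lattice_def using n by auto
  have w: "0 \<le> ?w i" "?w i \<le> 1" for i
    using hfun_pos[of eps y] hterm_pos[of eps i y] hterm_le_hfun[of eps i y] eps by auto
  have term_ge: "(if i = i0 then ?w i * (- eps * ?m) else 0) \<le> ?w i *
      (- eps * drift_margin eps i + (if 0 < y$i then 0 else eps * mu$i / (\<rho>$i + eps * G$i$i)))" for i
  proof (cases "i = i0")
    case False
    have "- eps * drift_margin eps i + (if 0 < y$i then 0 else eps * mu$i / (\<rho>$i + eps * G$i$i))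
        = eps * \<nu>$i / \<rho>$i"
      using y_other[OF False] by (simp add: drift_margin_def right_diff_distrib)
    moreover have "0 \<le> ?w i * (eps * \<nu>$i / \<rho>$i)"
      by (rule mult_nonneg_nonneg[OF w(1)]) (use eps nu_nonneg[of i] rho_pos[rule_format, of i] in simp)
    ultimately show ?thesis using False by simp
  qed (use i0 y_i0 in simp)
  have "0 \<le> ?m" using margin i0 by metis
  then have m_nonpos: "- eps * ?m \<le> 0" using eps by simp
  have "(1 - ?w i0) * (- eps * ?m) \<le> 0"
    by (rule mult_nonneg_nonpos[OF _ m_nonpos]) (use w(2)[of i0] in simp)
  then have "- eps * ?m \<le> ?w i0 * (- eps * ?m)" by (simp add: left_diff_distrib)
  also have "\<dots> = (\<Sum>i\<in>UNIV. if i = i0 then ?w i * (- eps * ?m) else 0)"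
    by simp
  also have "\<dots> \<le> jgen lam mu P (hfun P eps \<rho>) y / hfun P eps \<rho> y"
    unfolding jgen_hfun_ratio_eq[OF y less_imp_le[OF eps]] by (rule sum_mono[OF term_ge])
  finally show ?thesis .
qed

lemma Limsup_jgen_hfun_ratio_ge:
  assumes eps: "0 < eps" and margin: "\<forall>i. 0 \<le> drift_margin eps i"
  shows "ereal (- eps * Min (range (drift_margin eps)))
    \<le> Limsup at_infty_lattice (\<lambda>x. ereal (jgen lam mu P (hfun P eps \<rho>) x / hfun P eps \<rho> x))"
  unfolding Limsup_def
proof (rule INF_greatest)
  fix Q :: "int^'d \<Rightarrow> bool" assume "Q \<in> {Q. eventually Q at_infty_lattice}"
  then obtain N where N: "\<forall>x\<in>nonneg_lattice. N \<le> (\<Sum>k\<in>UNIV. \<bar>x$k\<bar>) \<longrightarrow> Q x"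
    unfolding eventually_at_infty_lattice by blast
  have "Min (range (drift_margin eps)) \<in> range (drift_margin eps)" by (rule Min_in) auto
  then obtain i0 where i0: "drift_margin eps i0 = Min (range (drift_margin eps))" by (metis rangeE)
  define y :: "int^'d" where "y = (\<chi> k. if k = i0 then max N 1 else 0)"
  have "y \<in> nonneg_lattice" unfolding y_def nonneg_lattice_def by auto
  moreover have "(\<Sum>k\<in>UNIV. \<bar>y$k\<bar>) = max N 1"
    unfolding y_def by (simp add: if_distrib[where f=abs] cong: if_cong)
  ultimately have "Q y" using N by simp
  moreover have "- eps * Min (range (drift_margin eps)) \<le> jgen lam mu P (hfun P eps \<rho>) y / hfun P eps \<rho> y"
    unfolding y_def by (rule jgen_hfun_ratio_ge_on_axis[OF eps margin i0]) simp
  ultimately show "ereal (- eps * Min (range (drift_margin eps)))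
      \<le> (SUP x\<in>{x. Q x}. ereal (jgen lam mu P (hfun P eps \<rho>) x / hfun P eps \<rho> x))"
    by (intro SUP_upper2[of y]) auto
qed

lemma jgen_hfun_ratio_le_exp:
  assumes eps: "0 < eps" and y: "y \<in> nonneg_lattice"
    and gap: "\<And>i v. v \<in> simplex_face i \<Longrightarrow>
      \<exists>j. gvec P (\<chi> i. eps * G$i$i / \<rho>$i) i \<bullet> v + \<delta> \<le> gvec P (\<chi> i. eps * G$i$i / \<rho>$i) j \<bullet> v"
  shows "jgen lam mu P (hfun P eps \<rho>) y / hfun P eps \<rho> y
    \<le> - eps * Min (range (drift_margin eps))
      + exp (- \<delta> * (\<Sum>k\<in>UNIV. \<bar>y$k\<bar>)) * (\<Sum>i\<in>UNIV. eps * mu$i / (\<rho>$i + eps * G$i$i))"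
proof -
  let ?m = "Min (range (drift_margin eps))"
  let ?w = "\<lambda>i. hterm eps i y / hfun P eps \<rho> y"
  let ?K = "\<lambda>i. eps * mu$i / (\<rho>$i + eps * G$i$i)"
  let ?n = "real_of_int (\<Sum>k\<in>UNIV. \<bar>y$k\<bar>)"
  have K_nonneg: "0 \<le> ?K i" for i
    using eps mu_pos rho_pos Gmat_nonneg[of i i] by (simp add: add_nonneg_nonneg less_imp_le)
  have w_nonneg: "0 \<le> ?w i" for i
    using hterm_pos[of eps i y] hfun_pos[of eps y] eps by simp
  have "?w i * (- eps * drift_margin eps i + (if 0 < y$i then 0 else ?K i))
      \<le> ?w i * (- eps * ?m) + exp (- \<delta> * ?n) * ?K i" for i
  proof -
    have "?m \<le> drift_margin eps i" by (rule Min_le) auto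
    then have "- eps * drift_margin eps i \<le> - eps * ?m" using eps by simp
    then have "?w i * (- eps * drift_margin eps i) \<le> ?w i * (- eps * ?m)"
      by (rule mult_left_mono[OF _ w_nonneg])
    moreover have "?w i * (if 0 < y$i then 0 else ?K i) \<le> exp (- \<delta> * ?n) * ?K i"
    proof (cases "0 < y$i")
      case False
      moreover have "0 \<le> y$i" using y by (simp add: nonneg_lattice_def)
      ultimately have "y$i = 0" by simp
      then have "hterm eps i y \<le> exp (- \<delta> * ?n) * hfun P eps \<rho> y"
        by (rule hterm_le_exp_hfun[OF y _ less_imp_le[OF eps] gap])
      then have "?w i \<le> exp (- \<delta> * ?n)"
        using hfun_pos[of eps y] eps by (simp add: divide_le_eq)
      then have "?w i * ?K i \<le> exp (- \<delta> * ?n) * ?K i" by (rule mult_right_mono[OF _ K_nonneg])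
      then show ?thesis using False by simp
    qed (use mult_nonneg_nonneg[OF exp_ge_zero K_nonneg, of "- \<delta> * ?n" i] in simp)
    ultimately show ?thesis unfolding distrib_left by (rule add_mono)
  qed
  then have "jgen lam mu P (hfun P eps \<rho>) y / hfun P eps \<rho> y
      \<le> (\<Sum>i\<in>UNIV. ?w i * (- eps * ?m)) + exp (- \<delta> * ?n) * (\<Sum>i\<in>UNIV. ?K i)"
    unfolding jgen_hfun_ratio_eq[OF y less_imp_le[OF eps]] sum_distrib_left sum.distrib[symmetric]
    by (rule sum_mono)
  also have "(\<Sum>i\<in>UNIV. ?w i * (- eps * ?m)) = - eps * ?m"
    unfolding sum_distrib_right[symmetric] sum_hterm_div_hfun[OF less_imp_le[OF eps]] by simp
  finally show ?thesis .
qed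

lemma Limsup_jgen_hfun_ratio_le:
  assumes eps: "0 < eps" and Gamma: "(\<chi> i. eps * G$i$i / \<rho>$i) \<in> Gamma_set P"
  shows "Limsup at_infty_lattice (\<lambda>x. ereal (jgen lam mu P (hfun P eps \<rho>) x / hfun P eps \<rho> x))
    \<le> ereal (- eps * Min (range (drift_margin eps)))"
proof (rule ereal_le_epsilon2)
  fix e :: real assume e: "0 < e"
  obtain \<delta> where \<delta>: "0 < \<delta>" and gap: "\<And>i v. v \<in> simplex_face i \<Longrightarrow>
      \<exists>j. gvec P (\<chi> i. eps * G$i$i / \<rho>$i) i \<bullet> v + \<delta> \<le> gvec P (\<chi> i. eps * G$i$i / \<rho>$i) j \<bullet> v"
    using Gamma_set_uniform_gap[OF Gamma] by blast
  define K where "K = (\<Sum>i\<in>UNIV. eps * mu$i / (\<rho>$i + eps * G$i$i))"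
  have "eventually (\<lambda>y. jgen lam mu P (hfun P eps \<rho>) y / hfun P eps \<rho> y
      \<le> - eps * Min (range (drift_margin eps)) + e) at_infty_lattice"
    unfolding eventually_at_infty_lattice
  proof (intro exI[of _ "\<lceil>K / (\<delta> * e)\<rceil>"] ballI impI)
    fix y :: "int^'d" assume y: "y \<in> nonneg_lattice" and large: "\<lceil>K / (\<delta> * e)\<rceil> \<le> (\<Sum>k\<in>UNIV. \<bar>y$k\<bar>)"
    have "exp (- \<delta> * (\<Sum>k\<in>UNIV. \<bar>y$k\<bar>)) * K \<le> e"
      using large by (intro exp_neg_mult_le[OF \<delta> e]) linarith
    moreover have "jgen lam mu P (hfun P eps \<rho>) y / hfun P eps \<rho> y
        \<le> - eps * Min (range (drift_margin eps)) + exp (- \<delta> * (\<Sum>k\<in>UNIV. \<bar>y$k\<bar>)) * K"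
      unfolding K_def by (rule jgen_hfun_ratio_le_exp[OF eps y]) (fact gap)
    ultimately show "jgen lam mu P (hfun P eps \<rho>) y / hfun P eps \<rho> y
        \<le> - eps * Min (range (drift_margin eps)) + e"
      by linarith
  qed
  then show "Limsup at_infty_lattice (\<lambda>x. ereal (jgen lam mu P (hfun P eps \<rho>) x / hfun P eps \<rho> x))
      \<le> ereal (- eps * Min (range (drift_margin eps))) + ereal e"
    by (intro Limsup_bounded) (simp add: eventually_mono)
qed

end

section \<open>A sufficient condition for membership in \<open>Gamma_set\<close>\<close>

lemma ln_one_plus_ge_chord:
  fixes t x :: real
  assumes "0 \<le> t" "t \<le> x" "0 < x"
  shows "t / x * ln (1 + x) \<le> ln (1 + t)"
proof -
  define s where "s = t / x"
  have s: "0 \<le> s" "s \<le> 1" unfolding s_def using assms by (auto simp: divide_le_eq)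
  have concave: "(1 - s) * ln 1 + s * ln (1 + x) \<le> ln ((1 - s) *\<^sub>R 1 + s *\<^sub>R (1 + x))"
    by (rule concave_onD[OF ln_concave s]) (use assms in auto)
  have combination: "(1 - s) *\<^sub>R 1 + s *\<^sub>R (1 + x) = 1 + t"
    unfolding s_def using assms by (simp add: field_simps)
  have "s * ln (1 + x) \<le> ln (1 + t)" using concave unfolding combination by simp
  then show ?thesis unfolding s_def .
qed

lemma Rcal_mult_le_ln:
  assumes "ereal g < xrho P \<rho>" and t: "0 \<le> t" "t \<le> g"
  shows "Rcal P \<rho> * t \<le> ln (1 + t)"
proof -
  obtain x where x: "0 < x" "Rcal P \<rho> * x \<le> ln (1 + x)" and "ereal g < ereal x"
    using assms(1) unfolding xrho_def less_Sup_iff by blast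
  then have "t \<le> x" using t by simp
  have "Rcal P \<rho> * t = t / x * (Rcal P \<rho> * x)" using x by simp
  also have "\<dots> \<le> t / x * ln (1 + x)" using x t by (intro mult_left_mono) auto
  also have "\<dots> \<le> ln (1 + t)" using \<open>t \<le> x\<close> x t by (intro ln_one_plus_ge_chord) auto
  finally show ?thesis .
qed

context transient_routing begin

lemma sum_rho_P_le_Rcal: "(\<Sum>j\<in>UNIV. \<rho>$j * P$j$i) \<le> Rcal P \<rho> * \<rho>$i"
proof -
  have "(\<Sum>j\<in>UNIV. \<rho>$j * P$j$i) / \<rho>$i \<le> Rcal P \<rho>" unfolding Rcal_def by (rule Max_ge) auto
  then show ?thesis using rho_pos[rule_format, of i] by (simp add: divide_le_eq)
qed

lemma sum_Gmat_le_Rcal_Max: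
  fixes v :: "real^'d"
  assumes v: "\<forall>k. 0 \<le> v$k" and v_i: "v$i = 0"
  shows "(\<Sum>k\<in>UNIV. v$k * G$k$i) / \<rho>$i \<le> Rcal P \<rho> * Max (range (\<lambda>j. (\<Sum>k\<in>UNIV. v$k * G$k$j) / \<rho>$j))"
proof -
  define w where "w j = (\<Sum>k\<in>UNIV. v$k * G$k$j)" for j
  define m where "m = Max (range (\<lambda>j. w j / \<rho>$j))"
  have w_le: "w l \<le> m * \<rho>$l" for l
  proof -
    have "w l / \<rho>$l \<le> m" unfolding m_def by (rule Max_ge) auto
    then show ?thesis using rho_pos[rule_format, of l] by (simp add: divide_le_eq)
  qed
  have "0 \<le> w i / \<rho>$i" unfolding w_def using v Gmat_nonneg rho_pos[rule_format, of i]
    by (simp add: sum_nonneg)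
  also have "\<dots> \<le> m" unfolding m_def by (rule Max_ge) auto
  finally have m: "0 \<le> m" .
  have "w i = (\<Sum>l\<in>UNIV. w l * P$l$i)"
  proof -
    have "w i = (\<Sum>k\<in>UNIV. \<Sum>l\<in>UNIV. v$k * G$k$l * P$l$i)"
      unfolding w_def using v_i
      by (subst Gmat_eq_I_plus_Gmat_P) (simp add: distrib_left sum.distrib sum_distrib_left mult.assoc
          if_distrib[where f="\<lambda>x. _ * x"] cong: if_cong)
    also have "\<dots> = (\<Sum>l\<in>UNIV. w l * P$l$i)"
      unfolding w_def sum_distrib_right by (rule sum.swap)
    finally show ?thesis .
  qed
  also have "\<dots> \<le> (\<Sum>l\<in>UNIV. m * \<rho>$l * P$l$i)"
    using w_le P_nonneg by (intro sum_mono mult_right_mono) auto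
  also have "\<dots> = m * (\<Sum>l\<in>UNIV. \<rho>$l * P$l$i)" by (simp add: sum_distrib_left mult.assoc)
  also have "\<dots> \<le> m * (Rcal P \<rho> * \<rho>$i)" using m by (intro mult_left_mono sum_rho_P_le_Rcal)
  finally show ?thesis
    using rho_pos[rule_format, of i] unfolding w_def m_def by (simp add: divide_le_eq mult_ac)
qed

lemma gvec_inner_eq:
  assumes "0 \<le> eps"
  shows "gvec P (\<chi> i. eps * G$i$i / \<rho>$i) j \<bullet> v = (\<Sum>k\<in>UNIV. ln (1 + eps * G$k$j / \<rho>$j) * v$k)"
  unfolding gvec_eq_ln_hfactor[OF assms] inner_vec_def hfactor_def by simp

lemma gvec_inner_less_when_hit:
  assumes eps: "0 < eps"
    and ln_bound: "\<And>k j. Rcal P \<rho> * (eps * G$k$j / \<rho>$j) \<le> ln (1 + eps * G$k$j / \<rho>$j)"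
    and v: "\<forall>k. 0 \<le> v$k" and v_i: "v$i = 0" and hit: "0 < G$k0$i * v$k0"
  shows "\<exists>j. gvec P (\<chi> i. eps * G$i$i / \<rho>$i) i \<bullet> v < gvec P (\<chi> i. eps * G$i$i / \<rho>$i) j \<bullet> v"
proof -
  define t where "t k j = eps * G$k$j / \<rho>$j" for k j
  have t_nonneg: "0 \<le> t k j" for k j
    unfolding t_def using eps Gmat_nonneg[of k j] rho_pos[rule_format, of j] by simp
  have gvec_t: "gvec P (\<chi> i. eps * G$i$i / \<rho>$i) j \<bullet> v = (\<Sum>k\<in>UNIV. ln (1 + t k j) * v$k)" for j
    unfolding t_def by (rule gvec_inner_eq[OF less_imp_le[OF eps]])
  define m where "m = Max (range (\<lambda>j. (\<Sum>k\<in>UNIV. v$k * G$k$j) / \<rho>$j))"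
  have "m \<in> range (\<lambda>j. (\<Sum>k\<in>UNIV. v$k * G$k$j) / \<rho>$j)" unfolding m_def by (rule Max_in) auto
  then obtain j0 where j0: "(\<Sum>k\<in>UNIV. v$k * G$k$j0) / \<rho>$j0 = m" by blast
  have sum_t: "(\<Sum>k\<in>UNIV. t k j * v$k) = eps * ((\<Sum>k\<in>UNIV. v$k * G$k$j) / \<rho>$j)" for j
    unfolding t_def by (simp add: sum_distrib_left sum_divide_distrib mult_ac)
  have "gvec P (\<chi> i. eps * G$i$i / \<rho>$i) i \<bullet> v < (\<Sum>k\<in>UNIV. t k i * v$k)"
    unfolding gvec_t
  proof (rule sum_strict_mono_ex1)
    show "\<forall>k\<in>UNIV. ln (1 + t k i) * v$k \<le> t k i * v$k"
      using v t_nonneg by (blast intro: mult_right_mono ln_add_one_self_le_self)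
    have "0 < t k0 i" "0 < v$k0"
      using hit eps rho_pos[rule_format, of i] Gmat_nonneg[of k0 i] v
      by (auto simp: t_def zero_less_mult_iff)
    then show "\<exists>k\<in>UNIV. ln (1 + t k i) * v$k < t k i * v$k"
      by (intro bexI[of _ k0]) (auto intro: mult_strict_right_mono ln_add_one_self_less_self)
  qed simp
  also have "\<dots> \<le> eps * (Rcal P \<rho> * m)"
    unfolding sum_t m_def using eps by (intro mult_left_mono sum_Gmat_le_Rcal_Max v v_i) simp
  also have "\<dots> = Rcal P \<rho> * (\<Sum>k\<in>UNIV. t k j0 * v$k)" unfolding sum_t j0 by simp
  also have "\<dots> \<le> gvec P (\<chi> i. eps * G$i$i / \<rho>$i) j0 \<bullet> v"
  proof -
    have "Rcal P \<rho> * (t k j0 * v$k) \<le> ln (1 + t k j0) * v$k" for k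
      using mult_right_mono[OF ln_bound[of k j0], of "v$k"] v unfolding t_def by (simp add: mult.assoc)
    then show ?thesis unfolding gvec_t sum_distrib_left by (rule sum_mono)
  qed
  finally show ?thesis by blast
qed

lemma gvec_inner_less_when_missed:
  assumes eps: "0 < eps" and v: "\<forall>k. 0 \<le> v$k" "v \<noteq> 0" and missed: "\<forall>k. G$k$i * v$k = 0"
  shows "\<exists>j. gvec P (\<chi> i. eps * G$i$i / \<rho>$i) i \<bullet> v < gvec P (\<chi> i. eps * G$i$i / \<rho>$i) j \<bullet> v"
proof -
  have zero_terms: "ln (1 + eps * G$k$i / \<rho>$i) * v$k = 0" for k
    using missed[rule_format, of k] by auto
  have "gvec P (\<chi> i. eps * G$i$i / \<rho>$i) i \<bullet> v = 0"
    unfolding gvec_inner_eq[OF less_imp_le[OF eps]] by (simp only: zero_terms sum.neutral_const)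
  obtain k where "0 < v$k" using v by (metis order_le_less vec_eq_iff zero_index)
  moreover have "0 < eps * G$k$k / \<rho>$k"
    using eps Gmat_diag_ge_1[of k] rho_pos[rule_format, of k] by simp
  ultimately have "0 < ln (1 + eps * G$k$k / \<rho>$k) * v$k" by simp
  also have "\<dots> \<le> gvec P (\<chi> i. eps * G$i$i / \<rho>$i) k \<bullet> v"
  proof -
    have "0 \<le> ln (1 + eps * G$l$k / \<rho>$k) * v$l" for l
      using eps Gmat_nonneg[of l k] rho_pos[rule_format, of k] v(1)
      by (intro mult_nonneg_nonneg ln_ge_zero) auto
    then show ?thesis unfolding gvec_inner_eq[OF less_imp_le[OF eps]] by (intro member_le_sum) auto
  qed
  finally show ?thesis using \<open>gvec P _ i \<bullet> v = 0\<close> by auto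
qed

lemma Gamma_set_of_ln_bound:
  assumes eps: "0 < eps"
    and ln_bound: "\<And>k j. Rcal P \<rho> * (eps * G$k$j / \<rho>$j) \<le> ln (1 + eps * G$k$j / \<rho>$j)"
  shows "(\<chi> i. eps * G$i$i / \<rho>$i) \<in> Gamma_set P"
  unfolding Gamma_set_def
proof (intro CollectI conjI allI impI)
  fix i show "0 \<le> (\<chi> i. eps * G$i$i / \<rho>$i) $ i"
    using eps Gmat_nonneg[of i i] rho_pos[rule_format, of i] by simp
next
  fix i and v :: "real^'d"
  let ?g = "gvec P (\<chi> i. eps * G$i$i / \<rho>$i)"
  assume "(\<forall>k. 0 \<le> v$k) \<and> v \<noteq> 0 \<and> v$i = 0"
  then have v: "\<forall>k. 0 \<le> v$k" "v \<noteq> 0" and v_i: "v$i = 0" by auto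
  have "\<exists>j. ?g i \<bullet> v < ?g j \<bullet> v"
  proof (cases "\<exists>k. 0 < G$k$i * v$k")
    case True
    then obtain k0 where "0 < G$k0$i * v$k0" by blast
    then show ?thesis by (rule gvec_inner_less_when_hit[OF eps ln_bound v(1) v_i])
  next
    case False
    then have "\<forall>k. G$k$i * v$k = 0"
      using v(1) Gmat_nonneg by (metis mult_nonneg_nonneg order_le_less)
    then show ?thesis by (rule gvec_inner_less_when_missed[OF eps v])
  qed
  then obtain j where "?g i \<bullet> v < ?g j \<bullet> v" by blast
  also have "\<dots> \<le> Max (range (\<lambda>j. ?g j \<bullet> v))" by (rule Max_ge) auto
  finally show "?g i \<bullet> v < Max (range (\<lambda>j. ?g j \<bullet> v))" .
qed

lemma Gamma_set_of_xrho:
  assumes eps: "0 < eps" and small: "\<forall>i. ereal eps < ereal (\<rho>$i / G$i$i) * xrho P \<rho>"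
  shows "(\<chi> i. eps * G$i$i / \<rho>$i) \<in> Gamma_set P"
proof (rule Gamma_set_of_ln_bound[OF eps])
  fix k j
  have rho_j: "0 < \<rho>$j" and G_jj: "0 < G$j$j" using rho_pos Gmat_diag_ge_1[of j] by auto
  then have pos: "0 < \<rho>$j / G$j$j" by simp
  have "ereal (eps * G$j$j / \<rho>$j) < xrho P \<rho>"
  proof (cases "xrho P \<rho>")
    case (real r)
    then have "eps < \<rho>$j * r / G$j$j" using small by simp
    then show ?thesis using real rho_j G_jj by (simp add: field_simps)
  qed (use small[rule_format, of j] pos rho_j G_jj in auto)
  moreover have "eps * G$k$j / \<rho>$j \<le> eps * G$j$j / \<rho>$j"
    using eps rho_pos[rule_format, of j] Gmat_le_diag[of k j] by (simp add: divide_right_mono)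
  ultimately show "Rcal P \<rho> * (eps * G$k$j / \<rho>$j) \<le> ln (1 + eps * G$k$j / \<rho>$j)"
    using eps rho_pos[rule_format, of j] Gmat_nonneg[of k j] by (intro Rcal_mult_le_ln) auto
qed

end

lemma margin_pos_of_eps_bound:
  fixes e r g m n :: real
  assumes e: "0 < e" and r: "0 < r" and g: "0 < g" and m: "0 < m" and n: "0 \<le> n"
    and bound: "e < r / g * (m / n - 1)"
  shows "n / r < m / (r + e * g)"
proof (cases "n = 0")
  case True
  have "0 < r + e * g" using e r g by (simp add: add_pos_pos)
  then show ?thesis using True m by simp
next
  case False
  with n have n: "0 < n" by simp
  have "e * g * n < r * (m - n)" using bound g n by (simp add: field_simps)
  then have "n * (r + e * g) < m * r" by (simp add: algebra_simps)
  moreover have "0 < r + e * g" using e r g by (simp add: add_pos_pos)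
  ultimately have "n < m * r / (r + e * g)" by (simp add: pos_less_divide_eq)
  then show ?thesis using r by (simp add: pos_divide_less_eq)
qed

context jackson_network begin

lemma drift_margin_pos:
  assumes eps: "0 < eps" and small: "eps < \<rho>$i / G$i$i * (mu$i / \<nu>$i - 1)"
  shows "0 < drift_margin eps i"
  using margin_pos_of_eps_bound[OF eps _ _ _ nu_nonneg small] rho_pos mu_pos Gmat_diag_ge_1[of i]
  by (simp add: drift_margin_def)

lemma Limsup_jgen_hfun_ratio_eq:
  assumes eps: "0 < eps" and Gamma: "(\<chi> i. eps * G$i$i / \<rho>$i) \<in> Gamma_set P"
    and margin: "\<forall>i. 0 \<le> drift_margin eps i"
  shows "Limsup at_infty_lattice (\<lambda>x. ereal (jgen lam mu P (hfun P eps \<rho>) x / hfun P eps \<rho> x))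
    = ereal (- eps * Min (range (drift_margin eps)))"
  using Limsup_jgen_hfun_ratio_le[OF eps Gamma] Limsup_jgen_hfun_ratio_ge[OF eps margin] by (rule antisym)

end

theorem corollary2p1:
  fixes lam mu \<nu> \<rho> :: "real^'d" and P :: "real^'d^'d"
  assumes lam_nonneg: "\<forall>i. 0 \<le> lam$i"
    and mu_pos: "\<forall>i. 0 < mu$i"
    and P_nonneg: "\<forall>i j. 0 \<le> P$i$j"
    and P_diag: "\<forall>i. P$i$i = 0"
    and P_sub: "\<forall>i. (\<Sum>j\<in>UNIV. P$i$j) \<le> 1"
    and A: "hypA lam mu P"
    and traffic: "\<forall>j. \<nu>$j = lam$j + (\<Sum>i\<in>UNIV. \<nu>$i * P$i$j)"
    and B: "\<forall>i. \<nu>$i < mu$i"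
    and rho_pos: "\<forall>i. 0 < \<rho>$i"
    and rho_sub: "\<forall>i. (\<Sum>j\<in>UNIV. \<rho>$j * P$j$i) < \<rho>$i"
  shows
   "(\<forall>eps. 0 < eps \<and> (\<chi> i. eps * Gmat P $i$i / \<rho>$i) \<in> Gamma_set P
        \<and> (\<forall>i. eps < \<rho>$i / Gmat P $i$i * (mu$i / \<nu>$i - 1)) \<longrightarrow>
       Limsup at_infty_lattice (\<lambda>x. ereal (jgen lam mu P (hfun P eps \<rho>) x / hfun P eps \<rho> x))
         = ereal (- eps * Min (range (\<lambda>i. mu$i / (\<rho>$i + eps * Gmat P $i$i) - \<nu>$i / \<rho>$i)))
       \<and> - eps * Min (range (\<lambda>i. mu$i / (\<rho>$i + eps * Gmat P $i$i) - \<nu>$i / \<rho>$i)) < 0)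
  \<and> (\<forall>eps. 0 < eps
        \<and> (\<forall>i. ereal eps < ereal (\<rho>$i / Gmat P $i$i) * xrho P \<rho>
              \<and> eps < \<rho>$i / Gmat P $i$i * (mu$i / \<nu>$i - 1)) \<longrightarrow>
       (\<chi> i. eps * Gmat P $i$i / \<rho>$i) \<in> Gamma_set P
       \<and> Limsup at_infty_lattice (\<lambda>x. ereal (jgen lam mu P (hfun P eps \<rho>) x / hfun P eps \<rho> x))
         = ereal (- eps * Min (range (\<lambda>i. mu$i / (\<rho>$i + eps * Gmat P $i$i) - \<nu>$i / \<rho>$i)))
       \<and> - eps * Min (range (\<lambda>i. mu$i / (\<rho>$i + eps * Gmat P $i$i) - \<nu>$i / \<rho>$i)) < 0)"
proof -
  interpret jackson_network P \<rho> lam mu \<nu>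
    by unfold_locales (fact lam_nonneg mu_pos P_nonneg P_diag P_sub traffic rho_pos rho_sub)+
  have margin: "drift_margin eps = (\<lambda>i. mu$i / (\<rho>$i + eps * Gmat P $i$i) - \<nu>$i / \<rho>$i)" for eps
    by (simp add: drift_margin_def fun_eq_iff)
  have "Limsup at_infty_lattice (\<lambda>x. ereal (jgen lam mu P (hfun P eps \<rho>) x / hfun P eps \<rho> x))
      = ereal (- eps * Min (range (drift_margin eps))) \<and> - eps * Min (range (drift_margin eps)) < 0"
    if eps: "0 < eps" and Gamma: "(\<chi> i. eps * Gmat P $i$i / \<rho>$i) \<in> Gamma_set P"
      and small: "\<forall>i. eps < \<rho>$i / Gmat P $i$i * (mu$i / \<nu>$i - 1)" for eps
  proof -
    have "0 < drift_margin eps i" for i using drift_margin_pos[OF eps] small by blast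
    then show ?thesis using Limsup_jgen_hfun_ratio_eq[OF eps Gamma] eps by (simp add: less_imp_le)
  qed
  then show ?thesis using Gamma_set_of_xrho unfolding margin by blast
qed

end
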